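(* Let $M$ be a closed, simply connected, differentiable 3-manifold. If a Morse function $f:M\to\mathbb{R}$ has exactly one critical point of index $0$ and exactly one critical point of index $3$, then for each (regular) level $a$ the level set $\partial M^a=\{x\in M\mid f(x)=a\}$ is connected.
   Context: A Morse function is a smooth function with finitely many critical points, all nondegenerate, with Morse indices in $\{0,1,2,3\}$. $M^a=\{x\in M\mid f(x)\le a\}$ and $\partial M^a=f^{-1}(a)$. *)

theory Defs
  imports "HOL-Analysis.Analysis"
begin

fun Ck_on :: "nat \<Rightarrow> 'a::euclidean_space set \<Rightarrow> ('a \<Rightarrow> 'b::real_normed_vector) \<Rightarrow> bool" where
  "Ck_on 0 S g = continuous_on S g"
| "Ck_on (Suc k) S g =
     (g differentiable_on S \<and> (\<forall>b\<in>Basis. Ck_on k S (\<lambda>x. frechet_derivative g (at x) b)))"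

definition smooth_on :: "'a::euclidean_space set \<Rightarrow> ('a \<Rightarrow> 'b::real_normed_vector) \<Rightarrow> bool" where
  "smooth_on S g \<longleftrightarrow> (\<forall>k. Ck_on k S g)"

text \<open>A local smooth parametrisation (inverse chart) of a 3-dimensional embedded submanifold M.\<close>
definition chart3 :: "'a::euclidean_space set \<Rightarrow> (real^3 \<Rightarrow> 'a) \<Rightarrow> (real^3) set \<Rightarrow> bool" where
  "chart3 M \<phi> V \<longleftrightarrow> open V \<and> openin (top_of_set M) (\<phi> ` V) \<and>
     (\<exists>\<psi>. homeomorphism V (\<phi> ` V) \<phi> \<psi>) \<and> smooth_on V \<phi> \<and>
     (\<forall>u\<in>V. inj (frechet_derivative \<phi> (at u)))"

definition smooth_3_manifold :: "'a::euclidean_space set \<Rightarrow> bool" where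
  "smooth_3_manifold M \<longleftrightarrow> (\<forall>p\<in>M. \<exists>\<phi> V. chart3 M \<phi> V \<and> p \<in> \<phi> ` V)"

definition smooth_fun_on :: "'a::euclidean_space set \<Rightarrow> ('a \<Rightarrow> real) \<Rightarrow> bool" where
  "smooth_fun_on M f \<longleftrightarrow> (\<forall>\<phi> V. chart3 M \<phi> V \<longrightarrow> smooth_on V (f \<circ> \<phi>))"

definition crit_points :: "'a::euclidean_space set \<Rightarrow> ('a \<Rightarrow> real) \<Rightarrow> 'a set" where
  "crit_points M f = {p\<in>M. \<forall>\<phi> V u. chart3 M \<phi> V \<and> u \<in> V \<and> \<phi> u = p \<longrightarrow>
      frechet_derivative (f \<circ> \<phi>) (at u) = (\<lambda>_. 0)}"

definition hess :: "(real^3 \<Rightarrow> real) \<Rightarrow> real^3 \<Rightarrow> real^3 \<Rightarrow> real^3 \<Rightarrow> real" where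
  "hess g u v w = frechet_derivative (\<lambda>x. frechet_derivative g (at x) v) (at u) w"

definition nondeg_at :: "(real^3 \<Rightarrow> real) \<Rightarrow> real^3 \<Rightarrow> bool" where
  "nondeg_at g u \<longleftrightarrow> (\<forall>v. (\<forall>w. hess g u v w = 0) \<longrightarrow> v = 0)"

definition index_at :: "(real^3 \<Rightarrow> real) \<Rightarrow> real^3 \<Rightarrow> nat" where
  "index_at g u = Max {dim W | W. subspace W \<and> (\<forall>w\<in>W. w \<noteq> 0 \<longrightarrow> hess g u w w < 0)}"

definition morse_function :: "'a::euclidean_space set \<Rightarrow> ('a \<Rightarrow> real) \<Rightarrow> bool" where
  "morse_function M f \<longleftrightarrow> smooth_fun_on M f \<and> finite (crit_points M f) \<and>
     (\<forall>p\<in>crit_points M f. \<forall>\<phi> V u. chart3 M \<phi> V \<and> u \<in> V \<and> \<phi> u = p \<longrightarrow>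
        nondeg_at (f \<circ> \<phi>) u \<and> index_at (f \<circ> \<phi>) u \<in> {0,1,2,3})"

definition morse_index :: "'a::euclidean_space set \<Rightarrow> ('a \<Rightarrow> real) \<Rightarrow> 'a \<Rightarrow> nat \<Rightarrow> bool" where
  "morse_index M f p k \<longleftrightarrow> (\<exists>\<phi> V u. chart3 M \<phi> V \<and> u \<in> V \<and> \<phi> u = p \<and> index_at (f \<circ> \<phi>) u = k)"

end

theory Submission
  imports Defs
begin

(*
  At a local minimum of f the Hessian in any chart is positive semidefinite, so the point is a
  critical point of index 0; at a local maximum it is negative semidefinite, symmetric (Schwarz) and
  nondegenerate, hence negative definite, so the point has index 3. Thus f has exactly one local
  minimum and one local maximum on M. As a is a regular value, no point of the level set is a local
  extremum, so every clopen piece of the sublevel set M^a contains a local minimum of f (the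
  minimum of f on that piece); hence M^a is connected, and likewise the superlevel set. A simply
  connected, locally path-connected space is unicoherent, so the intersection of these two closed
  connected sets covering M, which is the level set, is connected.
*)

section \<open>Second derivatives\<close>

lemma has_real_derivative_along_line:
  fixes g :: "'a::real_normed_vector \<Rightarrow> real"
  assumes "(g has_derivative D) (at (u + s *\<^sub>R w))"
  shows "((\<lambda>s. g (u + s *\<^sub>R w)) has_real_derivative D w) (at s)"
proof -
  interpret bounded_linear D using assms has_derivative_bounded_linear by blast
  have "((\<lambda>r. u + r *\<^sub>R w) has_derivative (\<lambda>r. r *\<^sub>R w)) (at s)"
    by (intro derivative_eq_intros) auto
  then have "((\<lambda>r. g (u + r *\<^sub>R w)) has_derivative (\<lambda>r. D (r *\<^sub>R w))) (at s)"
    using assms by (rule has_derivative_compose)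
  moreover have "(\<lambda>r. D (r *\<^sub>R w)) = (*) (D w)"
    by (auto simp: scaleR)
  ultimately show ?thesis
    unfolding has_field_derivative_def by simp
qed

lemma DERIV_nonneg_at_right_local_min:
  fixes \<phi> \<psi> :: "real \<Rightarrow> real"
  assumes "d > 0"
    and \<phi>': "\<And>s. 0 \<le> s \<Longrightarrow> s < d \<Longrightarrow> (\<phi> has_real_derivative \<psi> s) (at s)"
    and "\<psi> 0 = 0" and \<psi>': "(\<psi> has_real_derivative c) (at 0)"
    and min: "\<And>s. 0 < s \<Longrightarrow> s < d \<Longrightarrow> \<phi> 0 \<le> \<phi> s"
  shows "c \<ge> 0"
proof (rule ccontr)
  assume "\<not> c \<ge> 0"
  then obtain e where "e > 0" and \<psi>_neg: "\<And>h. 0 < h \<Longrightarrow> h < e \<Longrightarrow> \<psi> h < 0"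
    using DERIV_neg_dec_right[OF \<psi>'] \<open>\<psi> 0 = 0\<close> by force
  define t where "t = min d e / 2"
  have t: "0 < t" "t < d" "t < e"
    using \<open>d > 0\<close> \<open>e > 0\<close> by (auto simp: t_def)
  obtain z where z: "0 < z" "z < t" "\<phi> t - \<phi> 0 = (t - 0) * \<psi> z"
    using MVT2[of 0 t \<phi> \<psi>] \<phi>' t by force
  have "t * \<psi> z < 0"
    using z \<psi>_neg[of z] t by (simp add: mult_pos_neg)
  then have "\<phi> t < \<phi> 0"
    using z by simp
  with min[of t] t show False by simp
qed


lemma second_derivative_nonneg_at_local_min:
  fixes g :: "'a::real_normed_vector \<Rightarrow> real"
  assumes V: "open V" "u \<in> V" and g': "\<And>x. x \<in> V \<Longrightarrow> (g has_derivative D x) (at x)"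
    and D': "((\<lambda>x. D x w) has_derivative B) (at u)"
    and min: "eventually (\<lambda>y. g u \<le> g y) (at u)"
  shows "B w \<ge> 0"
proof (cases "w = 0")
  case True
  have "linear B"
    using D' by (rule has_derivative_linear)
  with True show ?thesis
    by (simp add: linear_0)
next
  case False
  obtain r where "r > 0" "ball u r \<subseteq> V"
    using V open_contains_ball by blast
  obtain e where "e > 0" and e: "\<And>y. y \<noteq> u \<Longrightarrow> dist y u < e \<Longrightarrow> g u \<le> g y"
    using min unfolding eventually_at by blast
  define d where "d = min r e / norm w"
  have near: "dist (u + s *\<^sub>R w) u < min r e" if "0 \<le> s" "s < d" for s
  proof -
    have "dist (u + s *\<^sub>R w) u = s * norm w"
      using that by (simp add: dist_norm)
    also have "\<dots> < d * norm w"
      using that False by simp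
    finally show ?thesis
      using False by (simp add: d_def)
  qed
  show ?thesis
  proof (rule DERIV_nonneg_at_right_local_min)
    show "d > 0" using \<open>r > 0\<close> \<open>e > 0\<close> False by (simp add: d_def)
    show "((\<lambda>s. g (u + s *\<^sub>R w)) has_real_derivative D (u + s *\<^sub>R w) w) (at s)"
      if "0 \<le> s" "s < d" for s
      using near[OF that] \<open>ball u r \<subseteq> V\<close>
      by (intro has_real_derivative_along_line g') (auto simp: dist_commute subset_iff)
    show "D (u + 0 *\<^sub>R w) w = 0"
      using has_derivative_local_min[OF g'[OF V(2)] min] by simp
    show "((\<lambda>s. D (u + s *\<^sub>R w) w) has_real_derivative B w) (at 0)"
      using D' by (intro has_real_derivative_along_line) simp
    show "g (u + 0 *\<^sub>R w) \<le> g (u + s *\<^sub>R w)" if "0 < s" "s < d" for s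
    proof -
      have "g u \<le> g (u + s *\<^sub>R w)"
        using near[of s] that False by (intro e) auto
      then show ?thesis by simp
    qed
  qed
qed

definition second_difference :: "('a::real_vector \<Rightarrow> real) \<Rightarrow> 'a \<Rightarrow> 'a \<Rightarrow> 'a \<Rightarrow> real \<Rightarrow> real" where
  "second_difference g u v w t = g (u + t *\<^sub>R (v + w)) - g (u + t *\<^sub>R v) - g (u + t *\<^sub>R w) + g u"

lemma second_difference_commute: "second_difference g u v w t = second_difference g u w v t"
  by (simp add: second_difference_def add.commute)

lemma second_difference_mean_value:
  fixes g :: "'a::real_normed_vector \<Rightarrow> real"
  assumes "t > 0"
    and in_V: "\<And>s. 0 \<le> s \<Longrightarrow> s \<le> t \<Longrightarrow> u + s *\<^sub>R v \<in> V \<and> u + t *\<^sub>R w + s *\<^sub>R v \<in> V"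
    and g': "\<And>x. x \<in> V \<Longrightarrow> (g has_derivative D x) (at x)"
  obtains z where "0 < z" "z < t"
    and "second_difference g u v w t = t * (D (u + t *\<^sub>R w + z *\<^sub>R v) v - D (u + z *\<^sub>R v) v)"
proof -
  have "\<exists>z>0. z < t \<and>
      (g (u + t *\<^sub>R w + t *\<^sub>R v) - g (u + t *\<^sub>R v)) - (g (u + t *\<^sub>R w + 0 *\<^sub>R v) - g (u + 0 *\<^sub>R v))
        = (t - 0) * (D (u + t *\<^sub>R w + z *\<^sub>R v) v - D (u + z *\<^sub>R v) v)"
  proof (rule MVT2[OF \<open>t > 0\<close>])
    fix s :: real
    assume "0 \<le> s" "s \<le> t"
    then show "((\<lambda>s. g (u + t *\<^sub>R w + s *\<^sub>R v) - g (u + s *\<^sub>R v)) has_real_derivative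
        D (u + t *\<^sub>R w + s *\<^sub>R v) v - D (u + s *\<^sub>R v) v) (at s)"
      using in_V by (intro DERIV_diff has_real_derivative_along_line g') auto
  qed
  then show ?thesis
    using that by (auto simp: second_difference_def algebra_simps)
qed

lemma second_difference_estimate:
  fixes g :: "'a::real_normed_vector \<Rightarrow> real"
  assumes "t > 0" "e \<ge> 0"
    and ball: "cball u (t * (norm v + norm w)) \<subseteq> V"
    and g': "\<And>x. x \<in> V \<Longrightarrow> (g has_derivative D x) (at x)"
    and "linear B"
    and rem: "\<And>y. norm y \<le> t * (norm v + norm w) \<Longrightarrow> \<bar>D (u + y) v - D u v - B y\<bar> \<le> e * norm y"
  shows "\<bar>second_difference g u v w t - t\<^sup>2 * B w\<bar> \<le> e * t\<^sup>2 * (2 * norm v + norm w)"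
proof -
  have small_v: "norm (s *\<^sub>R v) \<le> t * norm v" if "0 \<le> s" "s \<le> t" for s
    using that by (simp add: mult_right_mono)
  have small_wv: "norm (t *\<^sub>R w + s *\<^sub>R v) \<le> t * (norm v + norm w)" if "0 \<le> s" "s \<le> t" for s
    using small_v[OF that] norm_triangle_ineq[of "t *\<^sub>R w" "s *\<^sub>R v"] \<open>t > 0\<close>
    by (simp add: algebra_simps)
  have small_v': "norm (s *\<^sub>R v) \<le> t * (norm v + norm w)" if "0 \<le> s" "s \<le> t" for s
    using small_v[OF that] \<open>t > 0\<close> by (smt (verit) mult_left_mono norm_ge_zero)
  have in_V: "u + y \<in> V" if "norm y \<le> t * (norm v + norm w)" for y
    using that ball by (auto simp: dist_norm)
  have "u + s *\<^sub>R v \<in> V \<and> u + t *\<^sub>R w + s *\<^sub>R v \<in> V" if "0 \<le> s" "s \<le> t" for s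
    using in_V[OF small_v'[OF that]] in_V[OF small_wv[OF that]] by (simp add: add.assoc)
  then obtain z where z: "0 < z" "z < t"
    and mvt: "second_difference g u v w t = t * (D (u + t *\<^sub>R w + z *\<^sub>R v) v - D (u + z *\<^sub>R v) v)"
    using second_difference_mean_value[OF \<open>t > 0\<close> _ g'] by blast
  have "\<bar>D (u + (t *\<^sub>R w + z *\<^sub>R v)) v - D u v - B (t *\<^sub>R w + z *\<^sub>R v)\<bar> \<le> e * (t * (norm v + norm w))"
    using rem[OF small_wv] small_wv \<open>e \<ge> 0\<close> z by (meson less_imp_le mult_left_mono order_trans)
  moreover have "\<bar>D (u + z *\<^sub>R v) v - D u v - B (z *\<^sub>R v)\<bar> \<le> e * (t * norm v)"
    using rem[OF small_v'] small_v \<open>e \<ge> 0\<close> z by (meson less_imp_le mult_left_mono order_trans)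
  moreover have "B (t *\<^sub>R w + z *\<^sub>R v) - B (z *\<^sub>R v) = t * B w"
    using \<open>linear B\<close> by (simp add: linear_add linear_scale)
  ultimately have "\<bar>(D (u + t *\<^sub>R w + z *\<^sub>R v) v - D (u + z *\<^sub>R v) v) - t * B w\<bar>
      \<le> e * t * (2 * norm v + norm w)"
    by (simp add: algebra_simps)
  moreover have "second_difference g u v w t - t\<^sup>2 * B w
      = t * ((D (u + t *\<^sub>R w + z *\<^sub>R v) v - D (u + z *\<^sub>R v) v) - t * B w)"
    by (simp add: mvt power2_eq_square algebra_simps)
  ultimately show ?thesis
    using \<open>t > 0\<close> by (simp add: abs_mult power2_eq_square mult.assoc)
qed

lemma second_difference_quotient_tendsto:
  fixes g :: "'a::real_normed_vector \<Rightarrow> real"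
  assumes "open V" "u \<in> V" and g': "\<And>x. x \<in> V \<Longrightarrow> (g has_derivative D x) (at x)"
    and D': "((\<lambda>x. D x v) has_derivative B) (at u)"
  shows "((\<lambda>t. second_difference g u v w t / t\<^sup>2) \<longlongrightarrow> B w) (at_right 0)"
proof (rule tendstoI)
  fix \<epsilon> :: real assume "\<epsilon> > 0"
  define N where "N = 2 * norm v + norm w + 1"
  define e where "e = \<epsilon> / (2 * N)"
  have "N > 0"
    by (simp add: N_def add_nonneg_pos)
  then have "e > 0"
    using \<open>\<epsilon> > 0\<close> by (simp add: e_def)
  have "e * (2 * norm v + norm w) < e * (2 * N)"
    using \<open>e > 0\<close> by (intro mult_strict_left_mono) (auto simp: N_def add_nonneg_pos)
  also have "\<dots> = \<epsilon>"
    using \<open>N > 0\<close> by (simp add: e_def)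
  finally have "e * (2 * norm v + norm w) < \<epsilon>" .
  obtain \<delta> where "\<delta> > 0" and \<delta>: "\<And>y. norm (y - u) < \<delta> \<Longrightarrow>
      norm (D y v - D u v - B (y - u)) \<le> e * norm (y - u)"
    using D' \<open>e > 0\<close> unfolding has_derivative_at_alt by blast
  obtain r where "r > 0" "ball u r \<subseteq> V"
    using assms open_contains_ball by blast
  have "dist (second_difference g u v w t / t\<^sup>2) (B w) < \<epsilon>" if "0 < t" "t < min \<delta> r / N" for t
  proof -
    have "t * (norm v + norm w) \<le> t * N"
      using \<open>t > 0\<close> by (intro mult_left_mono) (auto simp: N_def)
    also have "\<dots> < min \<delta> r"
      using that \<open>N > 0\<close> by (simp add: pos_less_divide_eq)
    finally have "t * (norm v + norm w) < min \<delta> r" .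
    then have "cball u (t * (norm v + norm w)) \<subseteq> V"
      using \<open>ball u r \<subseteq> V\<close> by (auto simp: subset_iff)
    moreover have "\<bar>D (u + y) v - D u v - B y\<bar> \<le> e * norm y"
      if "norm y \<le> t * (norm v + norm w)" for y
      using \<delta>[of "u + y"] that \<open>t * (norm v + norm w) < min \<delta> r\<close> by simp
    ultimately have "\<bar>second_difference g u v w t - t\<^sup>2 * B w\<bar> \<le> e * t\<^sup>2 * (2 * norm v + norm w)"
      using \<open>t > 0\<close> \<open>e > 0\<close> g' has_derivative_linear[OF D']
      by (intro second_difference_estimate) auto
    then have "\<bar>second_difference g u v w t / t\<^sup>2 - B w\<bar> \<le> e * (2 * norm v + norm w)"
      using \<open>t > 0\<close> by (simp add: field_simps abs_div)
    then show ?thesis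
      using \<open>e * (2 * norm v + norm w) < \<epsilon>\<close> by (simp add: dist_real_def)
  qed
  moreover have "min \<delta> r / N > 0"
    using \<open>\<delta> > 0\<close> \<open>r > 0\<close> \<open>N > 0\<close> by simp
  ultimately show "eventually (\<lambda>t. dist (second_difference g u v w t / t\<^sup>2) (B w) < \<epsilon>) (at_right 0)"
    unfolding eventually_at_right_field by blast
qed

lemma derivative_of_partial_derivatives_symmetric:
  fixes g :: "'a::real_normed_vector \<Rightarrow> real"
  assumes "open V" "u \<in> V" and g': "\<And>x. x \<in> V \<Longrightarrow> (g has_derivative D x) (at x)"
    and "((\<lambda>x. D x v) has_derivative Bv) (at u)" and "((\<lambda>x. D x w) has_derivative Bw) (at u)"
  shows "Bv w = Bw v"
proof -
  have "((\<lambda>t. second_difference g u v w t / t\<^sup>2) \<longlongrightarrow> Bv w) (at_right 0)"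
    using assms(1,2) g' assms(4) by (rule second_difference_quotient_tendsto)
  moreover have "((\<lambda>t. second_difference g u v w t / t\<^sup>2) \<longlongrightarrow> Bw v) (at_right 0)"
    using second_difference_quotient_tendsto[OF assms(1,2) g' assms(5)]
    by (simp add: second_difference_commute)
  ultimately show ?thesis
    by (rule tendsto_unique[OF trivial_limit_at_right_real])
qed

lemma smooth_on_has_derivative:
  assumes "smooth_on V g" "open V" "x \<in> V"
  shows "(g has_derivative frechet_derivative g (at x)) (at x)"
proof -
  have "g differentiable_on V"
    using assms(1) Ck_on.simps(2)[of 0 V g] unfolding smooth_on_def by blast
  then have "g differentiable (at x)"
    using assms(2,3) differentiable_on_eq_differentiable_at by blast
  then show ?thesis
    using frechet_derivative_works by blast
qed

lemma smooth_on_partial_derivative: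
  assumes "smooth_on V g" "b \<in> Basis"
  shows "smooth_on V (\<lambda>x. frechet_derivative g (at x) b)"
  using assms unfolding smooth_on_def by (metis Ck_on.simps(2))

lemma smooth_on_directional_derivative_has_derivative:
  fixes g :: "'a::euclidean_space \<Rightarrow> real"
  assumes sm: "smooth_on V g" and "open V" "u \<in> V"
  shows "((\<lambda>x. frechet_derivative g (at x) v) has_derivative
           frechet_derivative (\<lambda>x. frechet_derivative g (at x) v) (at u)) (at u)"
proof -
  define pd where "pd b x = frechet_derivative g (at x) b" for b x
  have "(pd b has_derivative frechet_derivative (pd b) (at u)) (at u)" if "b \<in> Basis" for b
    unfolding pd_def using smooth_on_has_derivative[OF smooth_on_partial_derivative[OF sm that] assms(2,3)] .
  then have "((\<lambda>x. \<Sum>b\<in>Basis. (v \<bullet> b) * pd b x) has_derivative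
      (\<lambda>h. \<Sum>b\<in>Basis. (v \<bullet> b) * frechet_derivative (pd b) (at u) h)) (at u)"
    by (intro has_derivative_sum has_derivative_mult_right)
  moreover have "(\<Sum>b\<in>Basis. (v \<bullet> b) * pd b x) = frechet_derivative g (at x) v" if "x \<in> V" for x
  proof -
    have "linear (frechet_derivative g (at x))"
      using smooth_on_has_derivative[OF sm assms(2) that] by (rule has_derivative_linear)
    then have "frechet_derivative g (at x) (\<Sum>b\<in>Basis. (v \<bullet> b) *\<^sub>R b) = (\<Sum>b\<in>Basis. (v \<bullet> b) * pd b x)"
      by (simp add: linear_sum linear_cmul pd_def)
    then show ?thesis
      by (simp add: euclidean_representation)
  qed
  ultimately have "((\<lambda>x. frechet_derivative g (at x) v) has_derivative
      (\<lambda>h. \<Sum>b\<in>Basis. (v \<bullet> b) * frechet_derivative (pd b) (at u) h)) (at u)"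
    by (rule has_derivative_transform_within_open[OF _ assms(2,3)])
  then have "(\<lambda>x. frechet_derivative g (at x) v) differentiable (at u)"
    unfolding differentiable_def by blast
  then show ?thesis
    using frechet_derivative_works by blast
qed

lemma hess_has_derivative:
  assumes "smooth_on V g" "open V" "u \<in> V"
  shows "((\<lambda>x. frechet_derivative g (at x) v) has_derivative hess g u v) (at u)"
  unfolding hess_def using smooth_on_directional_derivative_has_derivative[OF assms] .

lemma linear_hess:
  assumes "smooth_on V g" "open V" "u \<in> V"
  shows "linear (hess g u v)"
  using hess_has_derivative[OF assms] by (rule has_derivative_linear)

lemma hess_commute:
  assumes "smooth_on V g" "open V" "u \<in> V"
  shows "hess g u v w = hess g u w v"
  using assms(2,3) smooth_on_has_derivative[OF assms(1,2)] hess_has_derivative[OF assms]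
    hess_has_derivative[OF assms]
  by (rule derivative_of_partial_derivatives_symmetric)

lemma negative_definite_if_semidefinite_nondegenerate:
  fixes B :: "'a::real_vector \<Rightarrow> 'a \<Rightarrow> real"
  assumes lin: "\<And>x. linear (B x)" and sym: "\<And>x y. B x y = B y x"
    and semidef: "\<And>w. B w w \<le> 0" and nondeg: "\<And>v. (\<forall>w. B v w = 0) \<Longrightarrow> v = 0"
    and "w \<noteq> 0"
  shows "B w w < 0"
proof (rule ccontr)
  assume "\<not> B w w < 0"
  then have "B w w = 0"
    using semidef[of w] by simp
  have "B w v = 0" for v
  proof (rule ccontr)
    assume "B w v \<noteq> 0"
    define c where "c = B w v"
    define q where "q = B v v"
    define t where "t = c / (1 - q)"
    have "q \<le> 0"
      using semidef unfolding q_def by blast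
    have expand: "B x (w + t *\<^sub>R v) = B x w + t * B x v" for x
      using lin[of x] by (simp add: linear_add linear_scale)
    have "B (w + t *\<^sub>R v) (w + t *\<^sub>R v) = B w (w + t *\<^sub>R v) + t * B v (w + t *\<^sub>R v)"
      by (simp add: expand sym[of "w + t *\<^sub>R v"])
    also have "\<dots> = 2 * t * c + t\<^sup>2 * q"
      using \<open>B w w = 0\<close> by (simp add: expand sym[of v w] c_def q_def power2_eq_square algebra_simps)
    also have "\<dots> = t * c + t\<^sup>2"
    proof -
      have "t * (1 - q) = c"
        using \<open>q \<le> 0\<close> by (simp add: t_def)
      then have "t * q = t - c"
        by (simp add: algebra_simps)
      have "2 * t * c + t\<^sup>2 * q = 2 * t * c + t * (t * q)"
        by (simp add: power2_eq_square)
      also have "\<dots> = t * c + t\<^sup>2"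
        unfolding \<open>t * q = t - c\<close> by (simp add: power2_eq_square algebra_simps)
      finally show ?thesis .
    qed
    also have "\<dots> > 0"
    proof -
      have "t * c = c\<^sup>2 / (1 - q)"
        by (simp add: t_def power2_eq_square)
      also have "\<dots> > 0"
        using \<open>q \<le> 0\<close> \<open>B w v \<noteq> 0\<close> by (simp add: c_def)
      finally show ?thesis
        by (simp add: add_pos_nonneg)
    qed
    finally show False
      using semidef[of "w + t *\<^sub>R v"] by simp
  qed
  then show False
    using nondeg \<open>w \<noteq> 0\<close> by blast
qed

section \<open>Morse indices at local extrema\<close>

lemma index_at_eq_0_if_semidefinite:
  assumes "\<And>w. hess g u w w \<ge> 0"
  shows "index_at g u = 0"
proof -
  have "W = {0}" if "subspace W" "\<forall>w\<in>W. w \<noteq> 0 \<longrightarrow> hess g u w w < 0" for W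
    using that assms subspace_0 by (force simp: not_less[symmetric])
  then have "{dim W |W. subspace W \<and> (\<forall>w\<in>W. w \<noteq> 0 \<longrightarrow> hess g u w w < 0)} = {0}"
    by (auto intro!: exI[of _ "{0}"] simp: subspace_0 dim_eq_0)
  then show ?thesis
    unfolding index_at_def by simp
qed

lemma index_at_eq_3_if_semidefinite_nondegenerate:
  assumes "smooth_on V g" "open V" "u \<in> V"
    and "\<And>w. hess g u w w \<le> 0" and "nondeg_at g u"
  shows "index_at g u = 3"
proof -
  let ?dims = "{dim W |W. subspace W \<and> (\<forall>w\<in>W. w \<noteq> 0 \<longrightarrow> hess g u w w < 0)}"
  have "hess g u w w < 0" if "w \<noteq> 0" for w
    using linear_hess[OF assms(1-3)] hess_commute[OF assms(1-3)] assms(4,5) that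
    by (intro negative_definite_if_semidefinite_nondegenerate[of "hess g u"]) (auto simp: nondeg_at_def)
  then have "3 \<in> ?dims"
    by (intro CollectI exI[of _ UNIV]) (auto simp: dim_UNIV)
  moreover have "?dims \<subseteq> {..3}"
    using dim_subset_UNIV_cart[where ?'n = 3] by auto
  ultimately have "Max ?dims = 3"
    by (intro Max_eqI) (auto intro: finite_subset)
  then show ?thesis
    unfolding index_at_def by simp
qed

text \<open>Local maxima of f are handled as local minima of \<open>\<lambda>x. - f x\<close>.\<close>

definition local_min_on :: "'a::metric_space set \<Rightarrow> ('a \<Rightarrow> real) \<Rightarrow> 'a \<Rightarrow> bool" where
  "local_min_on M f p \<longleftrightarrow> p \<in> M \<and> (\<exists>e>0. \<forall>z\<in>M. dist z p < e \<longrightarrow> f p \<le> f z)"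

lemma chart3D:
  assumes "chart3 M \<phi> V"
  shows "open V" "\<phi> ` V \<subseteq> M" "continuous_on V \<phi>" "openin (top_of_set M) (\<phi> ` V)"
  using assms unfolding chart3_def homeomorphism_def by (auto dest: openin_imp_subset)

lemma eventually_local_min_in_chart:
  assumes "chart3 M \<phi> V" "u \<in> V" and "local_min_on M h (\<phi> u)"
  shows "eventually (\<lambda>y. h (\<phi> u) \<le> h (\<phi> y)) (at u)"
proof -
  obtain e where "e > 0" and e: "\<And>z. z \<in> M \<Longrightarrow> dist z (\<phi> u) < e \<Longrightarrow> h (\<phi> u) \<le> h z"
    using assms(3) unfolding local_min_on_def by blast
  have "eventually (\<lambda>y. dist (\<phi> y) (\<phi> u) < e) (at u)"
    using chart3D(1,3)[OF assms(1)] assms(2) \<open>e > 0\<close>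
    by (intro tendstoD) (simp add: continuous_on_eq_continuous_at isCont_def tendsto_at_iff_tendsto_nhds[symmetric])
  moreover have "eventually (\<lambda>y. y \<in> V) (at u)"
    using chart3D(1)[OF assms(1)] assms(2) by (rule eventually_at_in_open')
  ultimately show ?thesis
    by eventually_elim (use chart3D(2)[OF assms(1)] e in blast)
qed

lemma chart_derivatives_at_local_min:
  assumes "smooth_fun_on M f" "chart3 M \<phi> V" "u \<in> V" and "local_min_on M f (\<phi> u)"
  shows "frechet_derivative (f \<circ> \<phi>) (at u) = (\<lambda>_. 0)" and "hess (f \<circ> \<phi>) u w w \<ge> 0"
proof -
  have sm: "smooth_on V (f \<circ> \<phi>)" and "open V"
    using assms(1,2) chart3D(1)[OF assms(2)] unfolding smooth_fun_on_def by blast+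
  have min: "eventually (\<lambda>y. (f \<circ> \<phi>) u \<le> (f \<circ> \<phi>) y) (at u)"
    using eventually_local_min_in_chart[OF assms(2-4)] by simp
  show "frechet_derivative (f \<circ> \<phi>) (at u) = (\<lambda>_. 0)"
    using smooth_on_has_derivative[OF sm \<open>open V\<close> assms(3)] min by (rule has_derivative_local_min)
  show "hess (f \<circ> \<phi>) u w w \<ge> 0"
    using \<open>open V\<close> assms(3) smooth_on_has_derivative[OF sm \<open>open V\<close>]
      hess_has_derivative[OF sm \<open>open V\<close> assms(3)] min
    by (rule second_derivative_nonneg_at_local_min)
qed

lemma chart_derivatives_at_local_max:
  assumes "smooth_fun_on M f" "chart3 M \<phi> V" "u \<in> V" and "local_min_on M (\<lambda>x. - f x) (\<phi> u)"
  shows "frechet_derivative (f \<circ> \<phi>) (at u) = (\<lambda>_. 0)" and "hess (f \<circ> \<phi>) u w w \<le> 0"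
proof -
  have sm: "smooth_on V (f \<circ> \<phi>)" and "open V"
    using assms(1,2) chart3D(1)[OF assms(2)] unfolding smooth_fun_on_def by blast+
  have max: "eventually (\<lambda>y. (f \<circ> \<phi>) y \<le> (f \<circ> \<phi>) u) (at u)"
    using eventually_local_min_in_chart[OF assms(2-4)] by simp
  show "frechet_derivative (f \<circ> \<phi>) (at u) = (\<lambda>_. 0)"
    using smooth_on_has_derivative[OF sm \<open>open V\<close> assms(3)] max by (rule has_derivative_local_max)
  have "- hess (f \<circ> \<phi>) u w w \<ge> 0"
  proof (rule second_derivative_nonneg_at_local_min[of V u "\<lambda>x. - (f \<circ> \<phi>) x"
        "\<lambda>x h. - frechet_derivative (f \<circ> \<phi>) (at x) h" w "\<lambda>h. - hess (f \<circ> \<phi>) u w h"])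
    show "((\<lambda>x. - (f \<circ> \<phi>) x) has_derivative (\<lambda>h. - frechet_derivative (f \<circ> \<phi>) (at x) h)) (at x)"
      if "x \<in> V" for x
      using smooth_on_has_derivative[OF sm \<open>open V\<close> that] by (rule has_derivative_minus)
    show "((\<lambda>x. - frechet_derivative (f \<circ> \<phi>) (at x) w) has_derivative (\<lambda>h. - hess (f \<circ> \<phi>) u w h)) (at u)"
      using hess_has_derivative[OF sm \<open>open V\<close> assms(3)] by (rule has_derivative_minus)
    show "eventually (\<lambda>y. - (f \<circ> \<phi>) u \<le> - (f \<circ> \<phi>) y) (at u)"
      using max by simp
  qed (use \<open>open V\<close> assms(3) in auto)
  then show "hess (f \<circ> \<phi>) u w w \<le> 0"
    by simp
qed

lemma crit_point_if_local_min:
  assumes "smooth_fun_on M f" "local_min_on M f p"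
  shows "p \<in> crit_points M f"
  using assms chart_derivatives_at_local_min(1)[OF assms(1)]
  unfolding crit_points_def local_min_on_def by blast

lemma crit_point_if_local_max:
  assumes "smooth_fun_on M f" "local_min_on M (\<lambda>x. - f x) p"
  shows "p \<in> crit_points M f"
  using assms chart_derivatives_at_local_max(1)[OF assms(1)]
  unfolding crit_points_def local_min_on_def by blast

lemma morse_index_0_if_local_min:
  assumes "smooth_3_manifold M" "smooth_fun_on M f" "local_min_on M f p"
  shows "morse_index M f p 0"
proof -
  obtain \<phi> V u where "chart3 M \<phi> V" "u \<in> V" "\<phi> u = p"
    using assms(1,3) unfolding smooth_3_manifold_def local_min_on_def by (metis imageE)
  then show ?thesis
    using chart_derivatives_at_local_min(2)[OF assms(2)] assms(3) index_at_eq_0_if_semidefinite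
    unfolding morse_index_def by metis
qed

lemma morse_index_3_if_local_max:
  assumes "smooth_3_manifold M" "morse_function M f" "local_min_on M (\<lambda>x. - f x) p"
  shows "morse_index M f p 3"
proof -
  have sf: "smooth_fun_on M f"
    using assms(2) unfolding morse_function_def by blast
  obtain \<phi> V u where ch: "chart3 M \<phi> V" "u \<in> V" "\<phi> u = p"
    using assms(1,3) unfolding smooth_3_manifold_def local_min_on_def by (metis imageE)
  have "nondeg_at (f \<circ> \<phi>) u"
    using assms(2) crit_point_if_local_max[OF sf assms(3)] ch unfolding morse_function_def by blast
  then have "index_at (f \<circ> \<phi>) u = 3"
    using ch sf chart_derivatives_at_local_max(2)[OF sf ch(1,2)] assms(3) chart3D(1)[OF ch(1)]
    by (intro index_at_eq_3_if_semidefinite_nondegenerate) (auto simp: smooth_fun_on_def)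
  then show ?thesis
    unfolding morse_index_def using ch by blast
qed

section \<open>Sublevel and level sets\<close>

lemma continuous_on_chart_image:
  assumes "smooth_fun_on M f" "chart3 M \<phi> V"
  shows "continuous_on (\<phi> ` V) f"
proof -
  obtain \<psi> where hom: "homeomorphism V (\<phi> ` V) \<phi> \<psi>"
    using assms(2) unfolding chart3_def by blast
  have "continuous_on V (f \<circ> \<phi>)"
    using assms unfolding smooth_fun_on_def smooth_on_def by (metis Ck_on.simps(1))
  moreover have "continuous_on (\<phi> ` V) \<psi>" "\<psi> ` \<phi> ` V \<subseteq> V"
    using hom unfolding homeomorphism_def by auto
  ultimately have "continuous_on (\<phi> ` V) ((f \<circ> \<phi>) \<circ> \<psi>)"
    by (metis continuous_on_compose continuous_on_subset)
  moreover have "((f \<circ> \<phi>) \<circ> \<psi>) x = f x" if "x \<in> \<phi> ` V" for x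
    using hom that unfolding homeomorphism_def by auto
  ultimately show ?thesis
    using continuous_on_eq by blast
qed

lemma continuous_on_if_smooth_fun_on:
  assumes man: "smooth_3_manifold M" and sf: "smooth_fun_on M f"
  shows "continuous_on M f"
  unfolding continuous_on_iff
proof (intro ballI allI impI)
  fix p and e :: real
  assume "p \<in> M" "e > 0"
  then obtain \<phi> V where ch: "chart3 M \<phi> V" "p \<in> \<phi> ` V"
    using man unfolding smooth_3_manifold_def by blast
  obtain d1 where "d1 > 0" and d1: "\<And>z. z \<in> \<phi> ` V \<Longrightarrow> dist z p < d1 \<Longrightarrow> dist (f z) (f p) < e"
    using continuous_on_chart_image[OF sf ch(1)] ch(2) \<open>e > 0\<close> unfolding continuous_on_iff by metis
  obtain d2 where "d2 > 0" and d2: "\<And>z. z \<in> M \<Longrightarrow> dist z p < d2 \<Longrightarrow> z \<in> \<phi> ` V"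
    using chart3D(4)[OF ch(1)] ch(2) unfolding openin_euclidean_subtopology_iff
    by (metis dist_commute)
  show "\<exists>d>0. \<forall>z\<in>M. dist z p < d \<longrightarrow> dist (f z) (f p) < e"
    using \<open>d1 > 0\<close> \<open>d2 > 0\<close> d1 d2 by (intro exI[of _ "min d1 d2"]) auto
qed

lemma locally_path_connected_if_smooth_3_manifold:
  assumes "smooth_3_manifold M"
  shows "locally path_connected M"
  unfolding locally_path_connected
proof (intro allI impI)
  fix W x
  assume W: "openin (top_of_set M) W \<and> x \<in> W"
  then have "x \<in> M"
    using openin_imp_subset by blast
  then obtain \<phi> V where ch: "chart3 M \<phi> V" "x \<in> \<phi> ` V"
    using assms unfolding smooth_3_manifold_def by blast
  obtain \<psi> where hom: "homeomorphism V (\<phi> ` V) \<phi> \<psi>"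
    using ch(1) unfolding chart3_def by blast
  have "locally path_connected (\<phi> ` V)"
  proof (rule homeomorphism_locally_imp[OF open_imp_locally_path_connected[OF chart3D(1)[OF ch(1)]] hom])
    show "path_connected S'" if "path_connected S" "homeomorphism S S' \<phi> \<psi>" for S S'
      using that path_connected_continuous_image unfolding homeomorphism_def by blast
  qed
  moreover have "openin (top_of_set M) (W \<inter> \<phi> ` V)"
    using W chart3D(4)[OF ch(1)] by blast
  then have "openin (top_of_set (\<phi> ` V)) (W \<inter> \<phi> ` V)"
    using openin_subset_trans chart3D(2)[OF ch(1)] by blast
  ultimately obtain U where U: "openin (top_of_set (\<phi> ` V)) U" "path_connected U" "x \<in> U" "U \<subseteq> W \<inter> \<phi> ` V"
    using W ch(2) unfolding locally_path_connected by blast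
  then show "\<exists>U. openin (top_of_set M) U \<and> path_connected U \<and> x \<in> U \<and> U \<subseteq> W"
    using openin_trans[OF U(1) chart3D(4)[OF ch(1)]] by blast
qed

lemma local_min_on_in_separated_piece:
  fixes M :: "'a::metric_space set" and f :: "'a \<Rightarrow> real"
  assumes "compact M" and cf: "continuous_on M f"
    and no_min: "\<And>p. p \<in> M \<Longrightarrow> f p = a \<Longrightarrow> \<not> local_min_on M f p"
    and "closed A" "closed B" and cover: "{x\<in>M. f x \<le> a} \<subseteq> A \<union> B"
    and disj: "A \<inter> B \<inter> {x\<in>M. f x \<le> a} = {}" and "A \<inter> {x\<in>M. f x \<le> a} \<noteq> {}"
  shows "\<exists>p\<in>A. f p \<le> a \<and> local_min_on M f p"
proof -
  let ?P = "A \<inter> {x\<in>M. f x \<le> a}"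
  have "closed {x\<in>M. f x \<le> a}"
    using continuous_on_closed_Collect_le[OF cf continuous_on_const compact_imp_closed[OF \<open>compact M\<close>]] .
  then have "compact (M \<inter> ?P)"
    using \<open>compact M\<close> \<open>closed A\<close> by (intro compact_Int_closed closed_Int)
  moreover have "M \<inter> ?P = ?P"
    by auto
  ultimately have "compact ?P"
    by simp
  moreover have "continuous_on ?P f"
    using cf by (rule continuous_on_subset) auto
  ultimately obtain p where p: "p \<in> ?P" and p_min: "\<And>y. y \<in> ?P \<Longrightarrow> f p \<le> f y"
    using continuous_attains_inf[of ?P f] \<open>?P \<noteq> {}\<close> by blast
  have "p \<notin> B"
    using p disj by blast
  then obtain e1 where "e1 > 0" and e1: "\<And>z. dist z p < e1 \<Longrightarrow> z \<notin> B"
    using \<open>closed B\<close> unfolding closed_def open_dist by (metis ComplD ComplI dist_commute)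
  have in_P: "z \<in> ?P" if "z \<in> M" "f z \<le> a" "dist z p < e1" for z
    using cover e1[OF that(3)] that by blast
  show ?thesis
  proof (cases "f p < a")
    case True
    have "p \<in> M" "a - f p > 0"
      using p True by auto
    then obtain e2 where "e2 > 0" and e2: "\<And>z. z \<in> M \<Longrightarrow> dist z p < e2 \<Longrightarrow> dist (f z) (f p) < a - f p"
      using cf unfolding continuous_on_iff by blast
    have "f p \<le> f z" if "z \<in> M" "dist z p < min e1 e2" for z
    proof -
      have "f z \<le> a"
        using that e2[of z] by (simp add: dist_real_def)
      then show ?thesis
        using that by (intro p_min in_P) auto
    qed
    then have "local_min_on M f p"
      unfolding local_min_on_def using \<open>p \<in> M\<close> \<open>e1 > 0\<close> \<open>e2 > 0\<close>
      by (metis min_less_iff_conj)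
    then show ?thesis
      using p by blast
  next
    case False
    then have "f p = a"
      using p by auto
    then have "\<not> (\<forall>z\<in>M. dist z p < e1 \<longrightarrow> f p \<le> f z)"
      using no_min[of p] p \<open>e1 > 0\<close> unfolding local_min_on_def by blast
    then obtain z where "z \<in> M" "dist z p < e1" "f z < f p"
      by (auto simp: not_le)
    then show ?thesis
      using in_P[of z] p_min[of z] \<open>f p = a\<close> by auto
  qed
qed

lemma connected_sublevel_set_if_unique_local_min:
  fixes M :: "'a::metric_space set" and f :: "'a \<Rightarrow> real"
  assumes "compact M" "continuous_on M f"
    and no_min: "\<And>p. p \<in> M \<Longrightarrow> f p = a \<Longrightarrow> \<not> local_min_on M f p"
    and unique: "\<And>p q. local_min_on M f p \<Longrightarrow> local_min_on M f q \<Longrightarrow> p = q"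
  shows "connected {x\<in>M. f x \<le> a}"
proof (rule ccontr)
  assume "\<not> connected {x\<in>M. f x \<le> a}"
  then obtain A B where AB: "closed A" "closed B" "{x\<in>M. f x \<le> a} \<subseteq> A \<union> B"
    "A \<inter> B \<inter> {x\<in>M. f x \<le> a} = {}" "A \<inter> {x\<in>M. f x \<le> a} \<noteq> {}" "B \<inter> {x\<in>M. f x \<le> a} \<noteq> {}"
    unfolding connected_closed by blast
  obtain p where "p \<in> A" "f p \<le> a" "local_min_on M f p"
    using local_min_on_in_separated_piece[OF assms(1-3) AB(1-5)] by blast
  moreover obtain q where "q \<in> B" "f q \<le> a" "local_min_on M f q"
    using local_min_on_in_separated_piece[OF assms(1-3) AB(2,1) _ _ AB(6)] AB(3,4) by blast
  ultimately show False
    using unique AB(4) unfolding local_min_on_def by blast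
qed

lemma connected_level_set_if_sublevel_superlevel_connected:
  fixes M :: "'a::euclidean_space set" and f :: "'a \<Rightarrow> real"
  assumes "simply_connected M" "locally path_connected M" and cf: "continuous_on M f"
    and "connected {x\<in>M. f x \<le> a}" "connected {x\<in>M. a \<le> f x}"
  shows "connected {x\<in>M. f x = a}"
proof -
  have "unicoherent M"
    using assms(1,2) by (intro Borsukian_imp_unicoherent simply_connected_imp_Borsukian)
  moreover have "closedin (top_of_set M) {x\<in>M. f x \<le> a}" "closedin (top_of_set M) {x\<in>M. a \<le> f x}"
    using continuous_closedin_preimage[OF cf closed_atMost, of a]
      continuous_closedin_preimage[OF cf closed_atLeast, of a] by (simp_all add: vimage_def Int_def)
  moreover have "M = {x\<in>M. f x \<le> a} \<union> {x\<in>M. a \<le> f x}"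
    by auto
  ultimately have "connected ({x\<in>M. f x \<le> a} \<inter> {x\<in>M. a \<le> f x})"
    using assms(4,5) by (metis unicoherentD)
  moreover have "{x\<in>M. f x \<le> a} \<inter> {x\<in>M. a \<le> f x} = {x\<in>M. f x = a}"
    by auto
  ultimately show ?thesis
    by simp
qed

theorem lemma4:
  fixes M :: "'a::euclidean_space set" and f :: "'a \<Rightarrow> real" and a :: real
  assumes "smooth_3_manifold M" and "compact M" and "simply_connected M"
    and "morse_function M f"
    and "card {p\<in>crit_points M f. morse_index M f p 0} = 1"
    and "card {p\<in>crit_points M f. morse_index M f p 3} = 1"
    and "\<forall>p\<in>crit_points M f. f p \<noteq> a"
  shows "connected {x\<in>M. f x = a}"
proof -
  have sf: "smooth_fun_on M f"
    using assms(4) unfolding morse_function_def by blast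
  have cf: "continuous_on M f"
    using assms(1) sf by (rule continuous_on_if_smooth_fun_on)
  obtain p0 where p0: "{p\<in>crit_points M f. morse_index M f p 0} = {p0}"
    using assms(5) card_1_singletonE by blast
  obtain p3 where p3: "{p\<in>crit_points M f. morse_index M f p 3} = {p3}"
    using assms(6) card_1_singletonE by blast
  have min_p0: "p = p0" if "local_min_on M f p" for p
    using p0 crit_point_if_local_min[OF sf that] morse_index_0_if_local_min[OF assms(1) sf that] by blast
  have max_p3: "p = p3" if "local_min_on M (\<lambda>x. - f x) p" for p
    using p3 crit_point_if_local_max[OF sf that] morse_index_3_if_local_max[OF assms(1,4) that] by blast
  have "connected {x\<in>M. f x \<le> a}"
  proof (rule connected_sublevel_set_if_unique_local_min[OF assms(2) cf])
    show "\<not> local_min_on M f p" if "p \<in> M" "f p = a" for p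
      using that assms(7) crit_point_if_local_min[OF sf] by blast
    show "p = q" if "local_min_on M f p" "local_min_on M f q" for p q
      using min_p0[OF that(1)] min_p0[OF that(2)] by simp
  qed
  moreover have "connected {x\<in>M. - f x \<le> - a}"
  proof (rule connected_sublevel_set_if_unique_local_min[OF assms(2) continuous_on_minus[OF cf]])
    show "\<not> local_min_on M (\<lambda>x. - f x) p" if "p \<in> M" "- f p = - a" for p
      using that assms(7) crit_point_if_local_max[OF sf] by auto
    show "p = q" if "local_min_on M (\<lambda>x. - f x) p" "local_min_on M (\<lambda>x. - f x) q" for p q
      using max_p3[OF that(1)] max_p3[OF that(2)] by simp
  qed
  ultimately show ?thesis
    using assms(3) locally_path_connected_if_smooth_3_manifold[OF assms(1)] cf
    by (intro connected_level_set_if_sublevel_superlevel_connected) auto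
qed

end
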